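(* Let $\mathcal X,\mathcal Y$ be Polish spaces and $(\mu,\nu)\in\mathcal P(\mathcal X)\times\mathcal P(\mathcal Y)$. Let $\mathbf X$ be a one-time-step stochastic process $(X_1=X,X_2=Y)$ with filtration $(\mathcal F_t)_{t=1}^2$ on some probability space such that $X\sim\mu$ and $Y\sim\nu$. Then there exists $P^{\mathbf X}\in\Lambda(\mu,\nu)$ with \[ \mathbb E\big[F(X,\mathscr L(Y|\mathcal F_1))\big]=\int_{\mathcal X\times\mathcal P(\mathcal Y)}F(x,p)\,P^{\mathbf X}(dx,dp)\qquad(\ast) \] for all measurable $F:\mathcal X\times\mathcal P(\mathcal Y)\to\overline{\mathbb{R}}$ for which the left-hand side of $(\ast)$ is well-defined. Conversely, any $P\in\Lambda(\mu,\nu)$ induces such a process $\mathbf X$ with $X\sim\mu$ and $Y\sim\nu$ such that $(\ast)$ holds with $P^{\mathbf X}=P$ for any $F$ for which the right-hand side of $(\ast)$ is well-defined.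
   Context: $\overline{\mathbb{R}}=\mathbb{R}\cup\{\pm\infty\}$; $\mathscr L(Y|\mathcal F_1)$ is the conditional law (regular conditional distribution) of $Y$ given $\mathcal F_1$. $\mathcal P(\mathcal Y)$ carries the weak topology. The intensity map $\hat I:\mathcal P(\mathcal X\times\mathcal P(\mathcal Y))\to\mathcal P(\mathcal X\times\mathcal Y)$ is defined by $\hat I(P)(f)=\int\int f(x,y)\,p(dy)\,P(dx,dp)$ for bounded continuous $f$, and $\Lambda(\mu,\nu):=\{P\in\mathcal P(\mathcal X\times\mathcal P(\mathcal Y)):\hat I(P)\text{ has marginals }\mu,\nu\}$. *)

theory Defs
  imports "HOL-Probability.Probability"
begin

definition probs :: "'b::topological_space measure set" where
  "probs = {p. prob_space p \<and> sets p = sets borel}"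

definition weak_topology :: "'b::topological_space measure topology" where
  "weak_topology = topology_generated_by
     (insert probs
       {{p \<in> probs. (\<integral>y. f y \<partial>p) \<in> U} | f U.
          continuous_on UNIV (f :: 'b \<Rightarrow> real) \<and> bounded (range f) \<and> open U})"

definition PY :: "'b::topological_space measure measure" where
  "PY = sigma probs {S. openin weak_topology S}"

definition XPY :: "('a::topological_space \<times> 'b::topological_space measure) measure" where
  "XPY = borel \<Otimes>\<^sub>M PY"

definition is_intensity ::
  "('a::topological_space \<times> 'b::topological_space measure) measure \<Rightarrow> ('a \<times> 'b) measure \<Rightarrow> bool" where
  "is_intensity P Q \<longleftrightarrow> prob_space Q \<and> sets Q = sets (borel \<Otimes>\<^sub>M borel) \<and>
     (\<forall>f :: 'a \<times> 'b \<Rightarrow> real. continuous_on UNIV f \<and> bounded (range f) \<longrightarrow>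
        (\<integral>z. f z \<partial>Q) = (\<integral>xp. (\<integral>y. f (fst xp, y) \<partial>(snd xp)) \<partial>P))"

definition Lambda ::
  "'a::topological_space measure \<Rightarrow> 'b::topological_space measure \<Rightarrow> ('a \<times> 'b measure) measure set" where
  "Lambda \<mu> \<nu> = {P. prob_space P \<and> sets P = sets XPY \<and>
     (\<exists>Q. is_intensity P Q \<and> distr Q borel fst = \<mu> \<and> distr Q borel snd = \<nu>)}"

definition ext_integrable :: "'c measure \<Rightarrow> ('c \<Rightarrow> ereal) \<Rightarrow> bool" where
  "ext_integrable M f \<longleftrightarrow>
     (\<integral>\<^sup>+x. e2ennreal (f x) \<partial>M) < \<infinity> \<or> (\<integral>\<^sup>+x. e2ennreal (- f x) \<partial>M) < \<infinity>"

definition ext_integral :: "'c measure \<Rightarrow> ('c \<Rightarrow> ereal) \<Rightarrow> ereal" where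
  "ext_integral M f =
     enn2ereal (\<integral>\<^sup>+x. e2ennreal (f x) \<partial>M) - enn2ereal (\<integral>\<^sup>+x. e2ennreal (- f x) \<partial>M)"

definition one_step_process ::
  "'c measure \<Rightarrow> 'c measure \<Rightarrow> 'c measure \<Rightarrow> ('c \<Rightarrow> 'a::topological_space) \<Rightarrow> ('c \<Rightarrow> 'b::topological_space) \<Rightarrow> bool" where
  "one_step_process M F1 F2 X Y \<longleftrightarrow> prob_space M \<and> subalgebra M F2 \<and> subalgebra F2 F1 \<and>
     X \<in> borel_measurable F1 \<and> Y \<in> borel_measurable F2"

definition is_cond_law ::
  "'c measure \<Rightarrow> 'c measure \<Rightarrow> ('c \<Rightarrow> 'b::topological_space) \<Rightarrow> ('c \<Rightarrow> 'b measure) \<Rightarrow> bool" where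
  "is_cond_law M F1 Y \<kappa> \<longleftrightarrow>
     (\<forall>\<omega>\<in>space M. \<kappa> \<omega> \<in> probs) \<and>
     (\<forall>B\<in>sets borel. (\<lambda>\<omega>. emeasure (\<kappa> \<omega>) B) \<in> borel_measurable F1 \<and>
        (\<forall>A\<in>sets F1. emeasure M (A \<inter> Y -` B \<inter> space M) = (\<integral>\<^sup>+\<omega>\<in>A. emeasure (\<kappa> \<omega>) B \<partial>M)))"

end

theory Submission
  imports Defs
begin

text \<open>Given the process, \<open>P\<^sup>X\<close> is the law of \<open>(X, \<kappa>)\<close> for a conditional law \<open>\<kappa>\<close> of \<open>Y\<close> given \<open>\<F>\<^sub>1\<close>.
  Its intensity, the bind of \<open>P\<^sup>X\<close> with \<open>(x, p) \<mapsto> \<delta>\<^sub>x \<otimes> p\<close>, is the joint law of \<open>(X, Y)\<close>, because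
  on rectangles this is the defining property of \<open>\<kappa>\<close>; hence \<open>P\<^sup>X \<in> \<Lambda>(\<mu>, \<nu>)\<close>, and \<open>(\<ast>)\<close> is a
  change of variables, conditional laws being unique almost surely. Conversely, for
  \<open>P \<in> \<Lambda>(\<mu>, \<nu>)\<close> draw \<open>(x, p)\<close> from \<open>P\<close> and then \<open>y\<close> from \<open>p\<close>; with \<open>\<F>\<^sub>1\<close> generated by \<open>(x, p)\<close>,
  the conditional law of \<open>y\<close> is \<open>p\<close> itself.

  The measure-theoretic core is that a kernel is measurable for the Borel sets of the weak
  topology as soon as all \<open>\<omega> \<mapsto> \<kappa>(\<omega>)(B)\<close> are: by a layer-cake discretisation, every weakly open
  set is a countable union of sets \<open>{q. q(H\<^sub>i) > r\<^sub>i, i \<le> n}\<close> with \<open>r\<^sub>i\<close> rational and \<open>H\<^sub>i\<close> finite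
  unions of sets of a countable basis.\<close>

lemma probsD:
  assumes "p \<in> probs"
  shows "prob_space p" and "sets p = sets borel" and "space p = UNIV"
  using assms sets_eq_imp_space_eq[of p borel] by (auto simp: probs_def)

lemma emeasure_UNIV_probs: "p \<in> probs \<Longrightarrow> emeasure p UNIV = 1"
  using prob_space.emeasure_space_1[OF probsD(1)] probsD(3) by fastforce

lemma topspace_weak_topology: "topspace weak_topology = probs"
  unfolding weak_topology_def topology_generated_by_topspace by auto

lemma openin_weak_topology_subset: "openin weak_topology S \<Longrightarrow> S \<subseteq> probs"
  using openin_subset topspace_weak_topology by metis

lemma space_PY [simp]: "space PY = probs"
  unfolding PY_def by (rule space_measure_of) (auto dest: openin_weak_topology_subset)

lemma sets_PY: "sets PY = sigma_sets probs {S. openin weak_topology S}"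
  unfolding PY_def by (rule sets_measure_of) (auto dest: openin_weak_topology_subset)

lemma borel_measurable_integral_PY:
  fixes f :: "'b::topological_space \<Rightarrow> real"
  assumes "continuous_on UNIV f" "bounded (range f)"
  shows "(\<lambda>p. \<integral>y. f y \<partial>p) \<in> borel_measurable (PY :: 'b measure measure)"
proof (rule borel_measurableI)
  fix U :: "real set"
  assume "open U"
  then have "openin weak_topology {p \<in> probs. (\<integral>y. f y \<partial>p) \<in> U}"
    unfolding weak_topology_def using assms by (intro topology_generated_by_Basis) blast
  moreover have "(\<lambda>p. \<integral>y. f y \<partial>p) -` U \<inter> space PY = {p \<in> probs. (\<integral>y. f y \<partial>p) \<in> U}"
    by auto
  ultimately show "(\<lambda>p. \<integral>y. f y \<partial>p) -` U \<inter> space (PY :: 'b measure measure) \<in> sets PY"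
    unfolding sets_PY by auto
qed

lemma integrable_bounded_continuous:
  fixes f :: "'b::topological_space \<Rightarrow> real"
  assumes "continuous_on UNIV f" "bounded (range f)" "p \<in> probs"
  shows "integrable p f"
proof -
  interpret prob_space p using probsD assms(3) by blast
  obtain B where "\<forall>x\<in>range f. norm x \<le> B" using assms(2) unfolding bounded_iff by blast
  then show ?thesis
    using borel_measurable_continuous_onI[OF assms(1)] probsD(2)[OF assms(3)]
    by (intro integrable_const_bound[where B=B]) (auto cong: measurable_cong_sets)
qed

section \<open>Approximating open sets by continuous functions\<close>

definition open_cutoff :: "'b::metric_space set \<Rightarrow> nat \<Rightarrow> 'b \<Rightarrow> real" where
  "open_cutoff G n z = min 1 (real n * infdist z (- G))"

lemma continuous_on_open_cutoff: "continuous_on UNIV (open_cutoff G n)"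
  unfolding open_cutoff_def by (intro continuous_intros)

lemma open_cutoff_bounds: "0 \<le> open_cutoff G n z" "open_cutoff G n z \<le> 1"
  unfolding open_cutoff_def using infdist_nonneg[of z "- G"] by auto

lemma bounded_range_open_cutoff: "bounded (range (open_cutoff G n))"
  using open_cutoff_bounds[of G n] by (intro boundedI[where B=1]) auto

text \<open>For \<open>G = UNIV\<close> the cutoff vanishes, since \<open>infdist z {} = 0\<close>.\<close>

lemma open_cutoff_tendsto:
  assumes "open G" "G \<noteq> UNIV"
  shows "(\<lambda>n. open_cutoff G n z) \<longlonglongrightarrow> indicator G z"
proof (cases "z \<in> G")
  case True
  have "- G \<noteq> {}" using assms(2) by auto
  then have "infdist z (- G) > 0"
    using True assms(1) in_closed_iff_infdist_zero[of "- G" z] infdist_nonneg[of z "- G"]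
    by (auto simp: closed_Compl)
  then have "\<forall>\<^sub>F n in sequentially. 1 \<le> real n * infdist z (- G)"
    by (intro eventually_sequentiallyI[of "nat \<lceil>1 / infdist z (- G)\<rceil>"])
       (auto simp: field_simps dest!: nat_ceiling_le_eq[THEN iffD1])
  then have "\<forall>\<^sub>F n in sequentially. open_cutoff G n z = 1"
    by eventually_elim (simp add: open_cutoff_def)
  then show ?thesis using True by (simp add: tendsto_eventually)
qed (simp add: open_cutoff_def)

lemma integral_open_cutoff_tendsto:
  assumes "open G" "G \<noteq> UNIV" "finite_measure p" "sets p = sets borel"
  shows "(\<lambda>n. \<integral>z. open_cutoff G n z \<partial>p) \<longlonglongrightarrow> measure p G"
proof -
  interpret finite_measure p by fact
  have "(\<lambda>n. \<integral>z. open_cutoff G n z \<partial>p) \<longlonglongrightarrow> (\<integral>z. indicator G z \<partial>p)"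
  proof (rule integral_dominated_convergence[where w="\<lambda>_. 1"])
    show "open_cutoff G n \<in> borel_measurable p" for n
      using assms(4) borel_measurable_continuous_onI[OF continuous_on_open_cutoff]
      by (simp cong: measurable_cong_sets)
    show "AE z in p. (\<lambda>n. open_cutoff G n z) \<longlonglongrightarrow> indicator G z"
      using open_cutoff_tendsto[OF assms(1,2)] by simp
    show "AE z in p. norm (open_cutoff G n z) \<le> 1" for n
      using open_cutoff_bounds[of G n] by simp
  qed (use assms in \<open>auto intro: borel_measurable_indicator\<close>)
  then show ?thesis using assms by simp
qed

lemma finite_measure_eqI_open:
  fixes M N :: "'b::topological_space measure"
  assumes "finite_measure M" "sets M = sets borel" "sets N = sets borel"
    and "\<And>G. open G \<Longrightarrow> emeasure M G = emeasure N G"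
  shows "M = N"
proof (rule measure_eqI_generator_eq[where E="Collect open" and \<Omega>=UNIV and A="\<lambda>_. UNIV"])
  show "sets M = sigma_sets UNIV (Collect open)" "sets N = sigma_sets UNIV (Collect open)"
    using assms(2,3) by (simp_all add: sets_borel)
  show "emeasure M UNIV \<noteq> \<infinity>" using assms(1) by (simp add: finite_measure.emeasure_finite)
qed (auto simp: Int_stable_def assms(4))

lemma finite_measure_eqI_bounded_continuous:
  fixes M N :: "'b::metric_space measure"
  assumes "finite_measure M" "finite_measure N" "sets M = sets borel" "sets N = sets borel"
    and eq: "\<And>f :: 'b \<Rightarrow> real. continuous_on UNIV f \<Longrightarrow> bounded (range f) \<Longrightarrow>
      (\<integral>z. f z \<partial>M) = (\<integral>z. f z \<partial>N)"
  shows "M = N"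
proof (rule finite_measure_eqI_open[OF assms(1,3,4)])
  fix G :: "'b set"
  assume "open G"
  have "measure M G = measure N G"
  proof (cases "G = UNIV")
    case True
    have "continuous_on UNIV (\<lambda>_::'b. 1::real)" "bounded (range (\<lambda>_::'b. 1::real))"
      by auto
    from eq[OF this] show ?thesis
      using True sets_eq_imp_space_eq[OF assms(3)] sets_eq_imp_space_eq[OF assms(4)] by simp
  next
    case False
    show ?thesis
      using integral_open_cutoff_tendsto[OF \<open>open G\<close> False assms(2,4)]
      unfolding eq[OF continuous_on_open_cutoff bounded_range_open_cutoff, symmetric]
      by (rule LIMSEQ_unique[OF integral_open_cutoff_tendsto[OF \<open>open G\<close> False assms(1,3)]])
  qed
  then show "emeasure M G = emeasure N G"
    using assms(1,2) by (simp add: finite_measure.emeasure_eq_measure)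
qed

lemma borel_measurable_emeasure_PY:
  fixes G :: "'b::metric_space set"
  assumes "open G"
  shows "(\<lambda>p. emeasure p G) \<in> borel_measurable (PY :: 'b measure measure)"
proof (cases "G = UNIV")
  case True
  have "emeasure p G = 1" if "p \<in> space PY" for p
    using that True emeasure_UNIV_probs by simp
  then show ?thesis
    using measurable_cong[of PY "\<lambda>p. emeasure p G" "\<lambda>_. 1"] by simp
next
  case False
  have "(\<lambda>p. measure p G) \<in> borel_measurable (PY :: 'b measure measure)"
  proof (rule borel_measurable_LIMSEQ_real)
    show "(\<lambda>n. \<integral>z. open_cutoff G n z \<partial>p) \<longlonglongrightarrow> measure p G" if "p \<in> space PY" for p
      using that probsD[of p] by (intro integral_open_cutoff_tendsto[OF assms False])
        (auto simp: prob_space_def)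
  qed (rule borel_measurable_integral_PY[OF continuous_on_open_cutoff bounded_range_open_cutoff])
  then have "(\<lambda>p. ennreal (measure p G)) \<in> borel_measurable (PY :: 'b measure measure)"
    by measurable
  moreover have "emeasure p G = ennreal (measure p G)" if "p \<in> space PY" for p :: "'b measure"
    using that by (auto dest!: probsD(1) simp: prob_space_def finite_measure.emeasure_eq_measure)
  ultimately show ?thesis
    using measurable_cong[of PY "\<lambda>p. emeasure p G" "\<lambda>p. ennreal (measure p G)"] by simp
qed

lemma measurable_PY_subprob_algebra:
  "(\<lambda>p. p) \<in> measurable (PY :: 'b::metric_space measure measure) (subprob_algebra borel)"
proof (rule measurable_subprob_algebra_generated[where G="Collect open" and \<Omega>=UNIV])
  show "subprob_space a" "sets a = sets borel" if "a \<in> space PY" for a :: "'b measure"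
    using that probsD[of a] by (auto simp: prob_space_imp_subprob_space)
qed (auto simp: sets_borel Int_stable_def borel_measurable_emeasure_PY)

definition countable_open_basis :: "'b::second_countable_topology set set" where
  "countable_open_basis = (SOME B. countable B \<and> topological_basis B)"

lemma countable_open_basis:
  "countable countable_open_basis" "topological_basis countable_open_basis"
  using someI_ex[OF ex_countable_basis] unfolding countable_open_basis_def by auto

definition basis_unions :: "'b::second_countable_topology set set" where
  "basis_unions = {\<Union>F | F. finite F \<and> F \<subseteq> countable_open_basis}"

lemma countable_basis_unions: "countable basis_unions"
proof -
  have "basis_unions = Union ` {F. finite F \<and> F \<subseteq> countable_open_basis}"
    unfolding basis_unions_def by auto
  also have "countable \<dots>"
    by (intro countable_image countable_Collect_finite_subset countable_open_basis(1))
  finally show ?thesis .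
qed

lemma open_basis_unions: "H \<in> basis_unions \<Longrightarrow> open H"
  unfolding basis_unions_def using countable_open_basis(2) topological_basis_open by blast

lemma open_incseq_basis_unions:
  fixes G :: "'b::second_countable_topology set"
  assumes "open G"
  shows "\<exists>H. incseq H \<and> range H \<subseteq> basis_unions \<and> (\<Union>n. H n) = G"
proof -
  obtain B where B: "B \<subseteq> countable_open_basis" "\<Union>B = G"
    using countable_open_basis(2) assms unfolding topological_basis_def by blast
  show ?thesis
  proof (cases "B = {}")
    case True
    show ?thesis
      by (rule exI[of _ "\<lambda>_. {}"]) (use True B in \<open>auto simp: basis_unions_def\<close>)
  next
    case False
    have "countable B" using B(1) countable_open_basis(1) countable_subset by blast
    then have range: "range (from_nat_into B) = B"
      using False by simp
    show ?thesis
    proof (intro exI[of _ "\<lambda>n. \<Union>(from_nat_into B ` {..<n})"] conjI)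
      show "incseq (\<lambda>n. \<Union>(from_nat_into B ` {..<n}))"
        unfolding incseq_def by (intro allI impI UN_mono) auto
      have "from_nat_into B ` {..<n} \<subseteq> countable_open_basis" for n
        using range B(1) by auto
      then show "range (\<lambda>n. \<Union>(from_nat_into B ` {..<n})) \<subseteq> basis_unions"
        unfolding basis_unions_def by blast
      have "(\<Union>n. \<Union>(from_nat_into B ` {..<n})) = \<Union>(range (from_nat_into B))"
        by (auto intro: lessI)
      then show "(\<Union>n. \<Union>(from_nat_into B ` {..<n})) = G"
        using range B(2) by simp
    qed
  qed
qed

lemma basis_unions_inner_approx:
  fixes G :: "'b::second_countable_topology set"
  assumes "open G" "finite_measure p" "sets p = sets borel" "\<delta> > 0"
  obtains H where "H \<in> basis_unions" "H \<subseteq> G" "measure p G - \<delta> < measure p H"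
proof -
  interpret finite_measure p by fact
  obtain H where H: "incseq H" "range H \<subseteq> basis_unions" "(\<Union>n. H n) = G"
    using open_incseq_basis_unions[OF assms(1)] by blast
  have "range H \<subseteq> sets p" using H(2) assms(3) by (auto intro!: borel_open open_basis_unions)
  then have "(\<lambda>n. measure p (H n)) \<longlonglongrightarrow> measure p G"
    using finite_Lim_measure_incseq[OF _ H(1)] H(3) by simp
  then have "\<forall>\<^sub>F n in sequentially. measure p G - \<delta> < measure p (H n)"
    using assms(4) by (intro order_tendstoD(1)) auto
  then obtain n where "measure p G - \<delta> < measure p (H n)"
    by (auto simp: eventually_sequentially)
  then show ?thesis using that H by blast
qed

lemma finite_measure_eqI_basis_unions:
  fixes M N :: "'b::second_countable_topology measure"
  assumes "finite_measure M" "sets M = sets borel" "sets N = sets borel"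
    and eq: "\<And>H. H \<in> basis_unions \<Longrightarrow> emeasure M H = emeasure N H"
  shows "M = N"
proof (rule finite_measure_eqI_open[OF assms(1-3)])
  fix G :: "'b set"
  assume "open G"
  then obtain H where H: "incseq H" "range H \<subseteq> basis_unions" "(\<Union>n. H n) = G"
    using open_incseq_basis_unions by blast
  have lim: "(\<lambda>n. emeasure L (H n)) \<longlonglongrightarrow> emeasure L G" if "sets L = sets borel" for L
    using Lim_emeasure_incseq[OF _ H(1), of L] H(2,3) that
    by (auto intro!: borel_open open_basis_unions)
  have "emeasure M (H n) = emeasure N (H n)" for n
    using H(2) eq by auto
  then have "(\<lambda>n. emeasure N (H n)) \<longlonglongrightarrow> emeasure M G"
    using lim[OF assms(2)] by simp
  then show "emeasure M G = emeasure N G"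
    using lim[OF assms(3)] by (rule LIMSEQ_unique)
qed

section \<open>Measurability of kernels into the weak topology\<close>

lemma layer_sum_le:
  fixes c t :: real
  assumes "0 < c"
  shows "(\<Sum>k<N. c * of_bool (real (Suc k) * c < t)) \<le> max 0 t"
proof (induction N arbitrary: t)
  case (Suc N)
  have "(\<Sum>k<Suc N. c * of_bool (real (Suc k) * c < t))
      = c * of_bool (c < t) + (\<Sum>k<N. c * of_bool (real (Suc k) * c < t - c))"
    unfolding sum.lessThan_Suc_shift by (simp add: algebra_simps)
  also have "\<dots> \<le> c * of_bool (c < t) + max 0 (t - c)"
    using Suc.IH by simp
  also have "\<dots> \<le> max 0 t"
    using assms by auto
  finally show ?case .
qed simp

lemma layer_sum_ge:
  fixes c t :: real
  assumes "0 < c" "t \<le> real (Suc N) * c"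
  shows "t \<le> c + (\<Sum>k<N. c * of_bool (real (Suc k) * c < t))"
  using assms(2)
proof (induction N arbitrary: t)
  case (Suc N)
  show ?case
  proof (cases "c < t")
    case True
    have "t - c \<le> c + (\<Sum>k<N. c * of_bool (real (Suc k) * c < t - c))"
      using Suc by (intro Suc.IH) (simp add: algebra_simps)
    also have "c + (\<Sum>k<N. c * of_bool (real (Suc k) * c < t - c))
        = (\<Sum>k<Suc N. c * of_bool (real (Suc k) * c < t))"
      unfolding sum.lessThan_Suc_shift using True by (simp add: algebra_simps)
    finally show ?thesis by simp
  next
    case False
    then show ?thesis
      using assms(1) by (auto intro!: add_increasing2 sum_nonneg)
  qed
qed simp

text \<open>Discretising the layer-cake formula at the levels \<open>c, 2c, \<dots>, N c\<close>.\<close>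

lemma integral_layer_bounds:
  fixes g :: "'b::topological_space \<Rightarrow> real"
  assumes q: "q \<in> probs" and g: "continuous_on UNIV g" and c: "0 < c"
    and g_bounds: "\<And>y. 0 \<le> g y" "\<And>y. g y \<le> real N * c"
  defines "L \<equiv> (\<Sum>k<N. c * measure q {y. real (Suc k) * c < g y})"
  shows "L \<le> (\<integral>y. g y \<partial>q)" and "(\<integral>y. g y \<partial>q) \<le> c + L"
proof -
  interpret prob_space q using probsD(1)[OF q] .
  define G where "G k = {y. real (Suc k) * c < g y}" for k
  have G: "G k \<in> sets q" for k
    unfolding G_def using probsD(2)[OF q]
    by (simp add: open_Collect_less continuous_on_const g)
  have sum_eq: "(\<Sum>k<N. c * of_bool (real (Suc k) * c < g y)) = (\<Sum>k<N. c * indicator (G k) y)" for y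
    by (simp add: G_def indicator_def)
  have int_sum: "integrable q (\<lambda>y. \<Sum>k<N. c * indicator (G k) y)"
    using G by (intro Bochner_Integration.integrable_sum integrable_mult_right integrable_real_indicator)
      (auto simp: emeasure_eq_measure)
  have int_g: "integrable q g"
    using g_bounds borel_measurable_continuous_onI[OF g] probsD(2)[OF q]
    by (intro integrable_const_bound[where B="real N * c"]) (auto cong: measurable_cong_sets)
  have L_eq: "L = (\<integral>y. (\<Sum>k<N. c * indicator (G k) y) \<partial>q)"
    unfolding L_def G_def[symmetric] using G
    by (subst Bochner_Integration.integral_sum)
      (auto intro!: integrable_mult_right integrable_real_indicator simp: emeasure_eq_measure)
  have lower: "(\<Sum>k<N. c * indicator (G k) y) \<le> g y" for y
    using layer_sum_le[OF c, where N=N and t="g y"] g_bounds(1)[of y] unfolding sum_eq by simp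
  have "g y \<le> real (Suc N) * c" for y
    using g_bounds(2)[of y] c by (simp add: algebra_simps)
  then have upper: "g y \<le> c + (\<Sum>k<N. c * indicator (G k) y)" for y
    using layer_sum_ge[OF c, where N=N and t="g y"] unfolding sum_eq by simp
  show "L \<le> (\<integral>y. g y \<partial>q)"
    unfolding L_eq using lower by (intro integral_mono[OF int_sum int_g])
  have "(\<integral>y. g y \<partial>q) \<le> (\<integral>y. c + (\<Sum>k<N. c * indicator (G k) y) \<partial>q)"
    using upper int_sum by (intro integral_mono int_g) auto
  also have "\<dots> = c + L"
    using int_sum by (simp add: L_eq prob_space)
  finally show "(\<integral>y. g y \<partial>q) \<le> c + L" .
qed

definition weak_nbhd :: "('b::topological_space set \<times> rat) set \<Rightarrow> 'b measure set" where
  "weak_nbhd S = {q \<in> probs. \<forall>(H, r) \<in> S. of_rat r < measure q H}"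

lemma weak_nbhd_Un: "weak_nbhd (S \<union> S') = weak_nbhd S \<inter> weak_nbhd S'"
  unfolding weak_nbhd_def by auto

definition weak_nbhd_indices :: "('b::second_countable_topology set \<times> rat) set set" where
  "weak_nbhd_indices = {S. finite S \<and> S \<subseteq> basis_unions \<times> UNIV}"

lemma weak_nbhd_indices_Un:
  "S \<in> weak_nbhd_indices \<Longrightarrow> S' \<in> weak_nbhd_indices \<Longrightarrow> S \<union> S' \<in> weak_nbhd_indices"
  unfolding weak_nbhd_indices_def by auto

lemma countable_weak_nbhd_indices: "countable weak_nbhd_indices"
proof -
  have "countable (basis_unions \<times> (UNIV :: rat set))"
    by (intro countable_SIGMA countable_basis_unions) auto
  then show ?thesis
    unfolding weak_nbhd_indices_def by (rule countable_Collect_finite_subset)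
qed

text \<open>Lower semicontinuity of \<open>p \<mapsto> \<integral>f dp\<close> with respect to the countably many conditions
  \<open>q(H) > r\<close>, \<open>H \<in> basis_unions\<close>, \<open>r \<in> \<rat>\<close>: each layer \<open>{g > k c}\<close> of the discretisation is open
  and hence approximated from inside by some \<open>H\<close>.\<close>

lemma weak_nbhd_integral_lower:
  fixes f :: "'b::second_countable_topology \<Rightarrow> real"
  assumes f: "continuous_on UNIV f" "bounded (range f)" and p: "p \<in> probs" and e: "0 < \<epsilon>"
  shows "\<exists>S \<in> weak_nbhd_indices. p \<in> weak_nbhd S \<and>
    (\<forall>q \<in> weak_nbhd S. (\<integral>y. f y \<partial>p) - \<epsilon> < (\<integral>y. f y \<partial>q))"
proof -
  interpret p: prob_space p using probsD(1)[OF p] .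
  obtain K where K: "0 < K" "\<And>y. \<bar>f y\<bar> \<le> K"
    using f(2) by (auto simp: bounded_pos)
  define g where "g y = f y + K" for y
  obtain N :: nat where N: "4 * K / \<epsilon> < real N"
    using reals_Archimedean2 by blast
  then have "0 < N" using K e by (auto intro!: Nat.gr0I simp: field_simps)
  define c where "c = 2 * K / real N"
  define \<delta> where "\<delta> = \<epsilon> / (4 * K)"
  have c: "0 < c" "c < \<epsilon> / 2" "real N * c = 2 * K"
    using \<open>0 < N\<close> N K e by (auto simp: c_def field_simps)
  have \<delta>: "0 < \<delta>" "real N * c * \<delta> = \<epsilon> / 2"
    using K e c(3) by (auto simp: \<delta>_def)
  have "0 \<le> g y" "g y \<le> real N * c" for y
    using K(2)[of y] unfolding g_def c(3) by (auto simp: abs_le_iff)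
  moreover have "continuous_on UNIV g"
    unfolding g_def by (intro continuous_intros f(1))
  ultimately have g: "continuous_on UNIV g" "\<And>y. 0 \<le> g y" "\<And>y. g y \<le> real N * c"
    by auto
  define G where "G k = {y. real (Suc k) * c < g y}" for k
  have "open (G k)" for k
    unfolding G_def by (intro open_Collect_less continuous_intros g(1))
  then have "\<exists>H r. H \<in> basis_unions \<and> H \<subseteq> G k \<and>
      measure p (G k) - \<delta> < of_rat r \<and> of_rat r < measure p H" for k
    using basis_unions_inner_approx[of "G k" p \<delta>] p.finite_measure_axioms probsD(2)[OF p] \<delta>(1)
      Rats_dense_in_real Rats_cases by (metis (no_types, lifting))
  then obtain H r where Hr: "\<And>k. H k \<in> basis_unions" "\<And>k. H k \<subseteq> G k"
    "\<And>k. measure p (G k) - \<delta> < of_rat (r k)" "\<And>k. of_rat (r k) < measure p (H k)"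
    by metis
  define S where "S = (\<lambda>k. (H k, r k)) ` {..<N}"
  have "\<forall>q \<in> weak_nbhd S. (\<integral>y. f y \<partial>p) - \<epsilon> < (\<integral>y. f y \<partial>q)"
  proof
    fix q
    assume "q \<in> weak_nbhd S"
    then have q: "q \<in> probs" and qH: "\<And>k. k < N \<Longrightarrow> of_rat (r k) < measure q (H k)"
      by (auto simp: weak_nbhd_def S_def)
    interpret q: prob_space q using probsD(1)[OF q] .
    have "measure p (G k) - \<delta> < measure q (G k)" if "k < N" for k
    proof -
      have "measure q (H k) \<le> measure q (G k)"
        using Hr(2) \<open>open (G k)\<close> probsD(2)[OF q] by (intro q.finite_measure_mono) auto
      then show ?thesis using Hr(3)[of k] qH[OF that] by linarith
    qed
    then have "(\<Sum>k<N. c * (measure p (G k) - \<delta>)) < (\<Sum>k<N. c * measure q (G k))"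
      using \<open>0 < N\<close> c(1) by (intro sum_strict_mono) auto
    moreover have "(\<Sum>k<N. c * (measure p (G k) - \<delta>)) = (\<Sum>k<N. c * measure p (G k)) - \<epsilon> / 2"
      using \<delta>(2) by (simp add: right_diff_distrib sum_subtractf)
    ultimately have "(\<Sum>k<N. c * measure p (G k)) - \<epsilon> / 2 < (\<Sum>k<N. c * measure q (G k))"
      by simp
    then have "(\<integral>y. g y \<partial>p) - \<epsilon> < (\<integral>y. g y \<partial>q)"
      using integral_layer_bounds[OF p g(1) c(1) g(2,3), folded G_def]
        integral_layer_bounds[OF q g(1) c(1) g(2,3), folded G_def] c(2)
      by linarith
    moreover have "(\<integral>y. g y \<partial>s) = (\<integral>y. f y \<partial>s) + K" if "s \<in> probs" for s
    proof -
      interpret prob_space s using probsD(1)[OF that] .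
      show ?thesis
        using integrable_bounded_continuous[OF f that] by (simp add: g_def prob_space)
    qed
    ultimately show "(\<integral>y. f y \<partial>p) - \<epsilon> < (\<integral>y. f y \<partial>q)"
      using p q by simp
  qed
  moreover have "p \<in> weak_nbhd S"
    using p Hr(4) by (auto simp: weak_nbhd_def S_def)
  moreover have "S \<in> weak_nbhd_indices"
    using Hr(1) by (auto simp: S_def weak_nbhd_indices_def)
  ultimately show ?thesis by blast
qed

lemma weak_nbhd_integral_in_open:
  fixes f :: "'b::second_countable_topology \<Rightarrow> real"
  assumes f: "continuous_on UNIV f" "bounded (range f)" and "open U"
    and p: "p \<in> probs" "(\<integral>y. f y \<partial>p) \<in> U"
  shows "\<exists>S \<in> weak_nbhd_indices. p \<in> weak_nbhd S \<and> weak_nbhd S \<subseteq> {q \<in> probs. (\<integral>y. f y \<partial>q) \<in> U}"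
proof -
  obtain e where e: "0 < e" "ball (\<integral>y. f y \<partial>p) e \<subseteq> U"
    using \<open>open U\<close> p(2) open_contains_ball by blast
  have f': "continuous_on UNIV (\<lambda>y. - f y)" "bounded (range (\<lambda>y. - f y))"
    using f by (auto intro!: continuous_intros simp: bounded_iff)
  obtain S where S: "S \<in> weak_nbhd_indices" "p \<in> weak_nbhd S"
      "\<And>q. q \<in> weak_nbhd S \<Longrightarrow> (\<integral>y. f y \<partial>p) - e < (\<integral>y. f y \<partial>q)"
    using weak_nbhd_integral_lower[OF f p(1) e(1)] by blast
  obtain S' where S': "S' \<in> weak_nbhd_indices" "p \<in> weak_nbhd S'"
      "\<And>q. q \<in> weak_nbhd S' \<Longrightarrow> (\<integral>y. - f y \<partial>p) - e < (\<integral>y. - f y \<partial>q)"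
    using weak_nbhd_integral_lower[OF f' p(1) e(1)] by blast
  have "weak_nbhd (S \<union> S') \<subseteq> {q \<in> probs. (\<integral>y. f y \<partial>q) \<in> U}"
  proof
    fix q
    assume "q \<in> weak_nbhd (S \<union> S')"
    then have q: "q \<in> probs" "q \<in> weak_nbhd S" "q \<in> weak_nbhd S'"
      by (auto simp: weak_nbhd_Un weak_nbhd_def[of S])
    have "dist (\<integral>y. f y \<partial>p) (\<integral>y. f y \<partial>q) < e"
      using S(3)[OF q(2)] S'(3)[OF q(3)] by (auto simp: dist_real_def abs_less_iff)
    then show "q \<in> {q \<in> probs. (\<integral>y. f y \<partial>q) \<in> U}"
      using e(2) q(1) by auto
  qed
  then show ?thesis
    using S(1,2) S'(1,2) weak_nbhd_indices_Un by (intro bexI[of _ "S \<union> S'"]) (auto simp: weak_nbhd_Un)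
qed

lemma openin_weak_topology_weak_nbhd:
  fixes T :: "'b::second_countable_topology measure set"
  assumes "openin weak_topology T"
  shows "\<forall>p \<in> T. \<exists>S \<in> weak_nbhd_indices. p \<in> weak_nbhd S \<and> weak_nbhd S \<subseteq> T"
  using assms unfolding weak_topology_def openin_topology_generated_by_iff
proof induct
  case (Int a b)
  show ?case
  proof
    fix p
    assume "p \<in> a \<inter> b"
    then obtain S S' where "S \<in> weak_nbhd_indices" "p \<in> weak_nbhd S" "weak_nbhd S \<subseteq> a"
      "S' \<in> weak_nbhd_indices" "p \<in> weak_nbhd S'" "weak_nbhd S' \<subseteq> b"
      using bspec[OF Int(2)] bspec[OF Int(4)] by (meson IntD1 IntD2)
    then show "\<exists>S \<in> weak_nbhd_indices. p \<in> weak_nbhd S \<and> weak_nbhd S \<subseteq> a \<inter> b"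
      using weak_nbhd_indices_Un by (intro bexI[of _ "S \<union> S'"]) (auto simp: weak_nbhd_Un)
  qed
next
  case (UN K)
  show ?case
  proof
    fix p
    assume "p \<in> \<Union>K"
    then obtain k where "k \<in> K" "p \<in> k" by blast
    then obtain S where "S \<in> weak_nbhd_indices" "p \<in> weak_nbhd S" "weak_nbhd S \<subseteq> k"
      using bspec[OF UN(2)[OF \<open>k \<in> K\<close>] \<open>p \<in> k\<close>] by (elim bexE conjE)
    then show "\<exists>S \<in> weak_nbhd_indices. p \<in> weak_nbhd S \<and> weak_nbhd S \<subseteq> \<Union>K"
      using \<open>k \<in> K\<close> by (intro bexI[of _ S]) auto
  qed
next
  case (Basis s)
  show ?case
  proof
    fix p
    assume "p \<in> s"
    show "\<exists>S \<in> weak_nbhd_indices. p \<in> weak_nbhd S \<and> weak_nbhd S \<subseteq> s"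
    proof (cases "s = probs")
      case True
      then show ?thesis
        using \<open>p \<in> s\<close> by (intro bexI[of _ "{}"]) (auto simp: weak_nbhd_def weak_nbhd_indices_def)
    next
      case False
      with Basis have "s \<in> {{p \<in> probs. (\<integral>y. f y \<partial>p) \<in> U} | f U.
          continuous_on UNIV (f :: 'b \<Rightarrow> real) \<and> bounded (range f) \<and> open U}"
        by simp
      then obtain f U where "s = {p \<in> probs. (\<integral>y. f y \<partial>p) \<in> U}"
        and "continuous_on UNIV (f :: 'b \<Rightarrow> real)" "bounded (range f)" "open U"
        by blast
      then show ?thesis
        using weak_nbhd_integral_in_open[of f U p] \<open>p \<in> s\<close> by auto
    qed
  qed
qed simp

lemma measurable_PY:
  fixes \<kappa> :: "'c \<Rightarrow> 'b::second_countable_topology measure"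
  assumes probs: "\<And>\<omega>. \<omega> \<in> space F \<Longrightarrow> \<kappa> \<omega> \<in> probs"
    and emeasure: "\<And>B. B \<in> sets borel \<Longrightarrow> (\<lambda>\<omega>. emeasure (\<kappa> \<omega>) B) \<in> borel_measurable F"
  shows "\<kappa> \<in> measurable F PY"
  unfolding PY_def
proof (rule measurable_measure_of)
  fix T :: "'b measure set"
  assume "T \<in> {S. openin weak_topology S}"
  then have T: "openin weak_topology T" by simp
  define I where "I = {S \<in> weak_nbhd_indices. weak_nbhd S \<subseteq> T}"
  have "countable I"
    unfolding I_def by (rule countable_subset[OF _ countable_weak_nbhd_indices]) auto
  have "\<kappa> -` T \<inter> space F = {\<omega> \<in> space F. \<exists>S \<in> I. \<kappa> \<omega> \<in> weak_nbhd S}"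
    using openin_weak_topology_weak_nbhd[OF T] unfolding I_def by blast
  also have "\<dots> = {\<omega> \<in> space F. \<exists>S \<in> I. \<forall>(H, r) \<in> S. of_rat r < measure (\<kappa> \<omega>) H}"
    using probs by (auto simp: weak_nbhd_def)
  also have "\<dots> \<in> sets F"
  proof (intro sets.sets_Collect_countable_Ex' \<open>countable I\<close>)
    fix S
    assume "S \<in> I"
    then have S: "finite S" "S \<subseteq> basis_unions \<times> UNIV" by (auto simp: I_def weak_nbhd_indices_def)
    have "(\<lambda>\<omega>. measure (\<kappa> \<omega>) H) \<in> borel_measurable F" if "H \<in> basis_unions" for H
      unfolding measure_def
      by (intro borel_measurable_enn2real emeasure borel_open open_basis_unions that)
    then have "{\<omega> \<in> space F. of_rat (snd z) < measure (\<kappa> \<omega>) (fst z)} \<in> sets F" if "z \<in> S" for z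
      using S(2) that by (auto intro!: borel_measurable_less borel_measurable_const)
    then have "{\<omega> \<in> space F. \<forall>z \<in> S. of_rat (snd z) < measure (\<kappa> \<omega>) (fst z)} \<in> sets F"
      by (intro sets.sets_Collect_finite_All S(1))
    then show "{\<omega> \<in> space F. \<forall>(H, r) \<in> S. of_rat r < measure (\<kappa> \<omega>) H} \<in> sets F"
      by (simp add: case_prod_beta)
  qed
  finally show "\<kappa> -` T \<inter> space F \<in> sets F" .
qed (use probs in \<open>auto dest: openin_weak_topology_subset\<close>)

section \<open>Uniqueness of conditional laws\<close>

lemma cond_law_emeasure_AE_eq:
  assumes M: "prob_space M" and sub: "subalgebra M F1"
    and \<kappa>: "is_cond_law M F1 Y \<kappa>" and \<kappa>': "is_cond_law M F1 Y \<kappa>'" and B: "B \<in> sets borel"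
  shows "AE \<omega> in M. emeasure (\<kappa> \<omega>) B = emeasure (\<kappa>' \<omega>) B"
proof -
  define R where "R = restr_to_subalg M F1"
  interpret R: finite_measure R
    unfolding R_def using finite_measure_restr_to_subalg[OF sub] M by (simp add: prob_space_def)
  have sets_R: "sets R = sets F1"
    unfolding R_def by (rule sets_restr_to_subalg[OF sub])
  have [measurable]: "(\<lambda>\<omega>. emeasure (\<kappa> \<omega>) B) \<in> borel_measurable F1"
    "(\<lambda>\<omega>. emeasure (\<kappa>' \<omega>) B) \<in> borel_measurable F1"
    using \<kappa> \<kappa>' B unfolding is_cond_law_def by blast+
  have "AE \<omega> in R. emeasure (\<kappa> \<omega>) B = emeasure (\<kappa>' \<omega>) B"
  proof (rule R.density_unique_finite_measure)
    fix A
    assume "A \<in> sets R"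
    then have A[measurable]: "A \<in> sets F1" using sets_R by simp
    have "(\<integral>\<^sup>+\<omega>. emeasure (\<kappa> \<omega>) B * indicator A \<omega> \<partial>R) = emeasure M (A \<inter> Y -` B \<inter> space M)"
      using \<kappa> A B unfolding R_def is_cond_law_def
      by (subst nn_integral_subalgebra2[OF sub]) auto
    also have "\<dots> = (\<integral>\<^sup>+\<omega>. emeasure (\<kappa>' \<omega>) B * indicator A \<omega> \<partial>R)"
      using \<kappa>' A B unfolding R_def is_cond_law_def
      by (subst nn_integral_subalgebra2[OF sub]) auto
    finally show "(\<integral>\<^sup>+\<omega>. emeasure (\<kappa> \<omega>) B * indicator A \<omega> \<partial>R)
        = (\<integral>\<^sup>+\<omega>. emeasure (\<kappa>' \<omega>) B * indicator A \<omega> \<partial>R)" .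
  qed (use sets_R in \<open>auto cong: measurable_cong_sets\<close>)
  then show ?thesis
    unfolding R_def by (rule AE_restr_to_subalg[OF sub])
qed

lemma cond_law_AE_eq:
  assumes "prob_space M" "subalgebra M F1" "is_cond_law M F1 Y \<kappa>" "is_cond_law M F1 Y \<kappa>'"
  shows "AE \<omega> in M. \<kappa> \<omega> = (\<kappa>' \<omega> :: 'b::second_countable_topology measure)"
proof -
  have "AE \<omega> in M. \<forall>H \<in> basis_unions. emeasure (\<kappa> \<omega>) H = emeasure (\<kappa>' \<omega>) H"
    using cond_law_emeasure_AE_eq[OF assms borel_open[OF open_basis_unions]]
    by (intro AE_ball_countable' countable_basis_unions)
  then show ?thesis
  proof (rule AE_mp[OF _ AE_I2], intro impI)
    fix \<omega>
    assume "\<omega> \<in> space M" "\<forall>H \<in> basis_unions. emeasure (\<kappa> \<omega>) H = emeasure (\<kappa>' \<omega>) H"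
    moreover have "\<kappa> \<omega> \<in> probs" "\<kappa>' \<omega> \<in> probs"
      using \<open>\<omega> \<in> space M\<close> assms(3,4) unfolding is_cond_law_def by auto
    ultimately show "\<kappa> \<omega> = \<kappa>' \<omega>"
      by (intro finite_measure_eqI_basis_unions) (auto dest: probsD simp: prob_space_def)
  qed
qed

section \<open>The intensity as a Giry-monad bind\<close>

lemma space_XPY: "space XPY = UNIV \<times> probs"
  unfolding XPY_def by (simp add: space_pair_measure)

lemma measurable_snd_XPY:
  "snd \<in> measurable (XPY :: ('a::topological_space \<times> 'b::metric_space measure) measure) (subprob_algebra borel)"
  unfolding XPY_def by (rule measurable_compose[OF measurable_snd measurable_PY_subprob_algebra])

definition intensity ::
  "('a::topological_space \<times> 'b::topological_space measure) measure \<Rightarrow> ('a \<times> 'b) measure" where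
  "intensity P = P \<bind> (\<lambda>xp. distr (snd xp) (borel \<Otimes>\<^sub>M borel) (Pair (fst xp)))"

lemma measurable_intensity_kernel:
  "(\<lambda>xp. distr (snd xp) (borel \<Otimes>\<^sub>M borel) (Pair (fst xp)))
    \<in> measurable (XPY :: ('a::topological_space \<times> 'b::metric_space measure) measure)
        (subprob_algebra (borel \<Otimes>\<^sub>M borel))"
  by (rule measurable_distr2[OF _ measurable_snd_XPY]) (simp add: XPY_def split_beta')

lemma prob_space_intensity_kernel:
  assumes "xp \<in> space XPY"
  shows "prob_space (distr (snd xp) (borel \<Otimes>\<^sub>M borel) (Pair (fst xp)))"
proof -
  have "snd xp \<in> probs" using assms by (auto simp: space_XPY)
  then show ?thesis
    using measurable_Pair1'[of "fst xp" borel borel] probsD(1,2)[of "snd xp"]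
    by (intro prob_space.prob_space_distr) (auto cong: measurable_cong_sets)
qed

context
  fixes P :: "('a::{metric_space, second_countable_topology} \<times>
      'b::{metric_space, second_countable_topology} measure) measure"
  assumes P: "prob_space P" "sets P = sets XPY"
begin

lemma measurable_intensity_kernel':
  "(\<lambda>xp. distr (snd xp) (borel \<Otimes>\<^sub>M borel) (Pair (fst xp))) \<in> measurable P (subprob_algebra (borel \<Otimes>\<^sub>M borel))"
  using measurable_intensity_kernel by (simp cong: measurable_cong_sets add: P(2))

lemma sets_intensity: "sets (intensity P) = sets (borel \<Otimes>\<^sub>M borel)"
  unfolding intensity_def
  by (rule sets_bind_measurable[OF measurable_intensity_kernel' prob_space.not_empty[OF P(1)]])

lemma prob_space_intensity_kernel': "xp \<in> space P \<Longrightarrow> prob_space (distr (snd xp) (borel \<Otimes>\<^sub>M borel) (Pair (fst xp)))"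
  using prob_space_intensity_kernel sets_eq_imp_space_eq[OF P(2)] by simp

lemma prob_space_intensity: "prob_space (intensity P)"
  unfolding intensity_def using prob_space_intensity_kernel'
  by (intro prob_space.prob_space_bind[OF P(1) _ measurable_intensity_kernel'] AE_I2)

lemma integral_intensity:
  fixes f :: "'a \<times> 'b \<Rightarrow> real"
  assumes f: "f \<in> borel_measurable (borel \<Otimes>\<^sub>M borel)" "\<And>z. \<bar>f z\<bar> \<le> B"
  shows "(\<integral>z. f z \<partial>intensity P) = (\<integral>xp. (\<integral>y. f (fst xp, y) \<partial>snd xp) \<partial>P)"
proof -
  have "(\<integral>z. f z \<partial>intensity P) = (\<integral>xp. (\<integral>z. f z \<partial>distr (snd xp) (borel \<Otimes>\<^sub>M borel) (Pair (fst xp))) \<partial>P)"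
    unfolding intensity_def
    using f prob_space.emeasure_space_1[OF prob_space_intensity_kernel'] P(1)
    by (intro integral_bind[OF _ _ measurable_intensity_kernel', where B'=1] AE_I2)
      (auto simp: prob_space_def)
  also have "\<dots> = (\<integral>xp. (\<integral>y. f (fst xp, y) \<partial>snd xp) \<partial>P)"
    using f(1) sets_eq_imp_space_eq[OF P(2)]
    by (intro Bochner_Integration.integral_cong refl integral_distr)
      (auto simp: space_XPY dest!: probsD(2) cong: measurable_cong_sets)
  finally show ?thesis .
qed

lemma is_intensity_intensity: "is_intensity P (intensity P)"
  unfolding is_intensity_def
proof (intro conjI allI impI prob_space_intensity sets_intensity)
  fix f :: "'a \<times> 'b \<Rightarrow> real"
  assume "continuous_on UNIV f \<and> bounded (range f)"
  then obtain B where "f \<in> borel_measurable (borel \<Otimes>\<^sub>M borel)" "\<And>z. \<bar>f z\<bar> \<le> B"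
    unfolding borel_prod by (auto intro: borel_measurable_continuous_onI simp: bounded_iff)
  then show "(\<integral>z. f z \<partial>intensity P) = (\<integral>xp. (\<integral>y. f (fst xp, y) \<partial>snd xp) \<partial>P)"
    by (rule integral_intensity)
qed

lemma is_intensity_imp_eq:
  assumes "is_intensity P Q"
  shows "Q = intensity P"
proof (rule finite_measure_eqI_bounded_continuous)
  have "prob_space Q" "sets Q = sets (borel \<Otimes>\<^sub>M borel)"
    using assms by (auto simp: is_intensity_def)
  then show "finite_measure Q" "sets Q = sets borel"
    unfolding borel_prod by (simp_all add: prob_space_def)
  show "finite_measure (intensity P)" "sets (intensity P) = sets borel"
    using prob_space_intensity sets_intensity unfolding borel_prod by (simp_all add: prob_space_def)
  show "(\<integral>z. f z \<partial>Q) = (\<integral>z. f z \<partial>intensity P)"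
    if "continuous_on UNIV f" "bounded (range f)" for f :: "'a \<times> 'b \<Rightarrow> real"
    using that assms is_intensity_intensity unfolding is_intensity_def by auto
qed

end

lemma Lambda_iff_intensity:
  fixes P :: "('a::{metric_space, second_countable_topology} \<times>
      'b::{metric_space, second_countable_topology} measure) measure"
  shows "P \<in> Lambda \<mu> \<nu> \<longleftrightarrow> prob_space P \<and> sets P = sets XPY \<and>
    distr (intensity P) borel fst = \<mu> \<and> distr (intensity P) borel snd = \<nu>"
  unfolding Lambda_def using is_intensity_intensity is_intensity_imp_eq by blast

lemma one_step_processD:
  assumes "one_step_process M F1 F2 X Y"
  shows "prob_space M" "subalgebra M F1" "X \<in> borel_measurable F1"
    "X \<in> borel_measurable M" "Y \<in> borel_measurable M"
proof -
  have sub2: "subalgebra M F2" and sub21: "subalgebra F2 F1"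
    and X: "X \<in> borel_measurable F1" and Y: "Y \<in> borel_measurable F2"
    using assms unfolding one_step_process_def by auto
  show sub: "subalgebra M F1"
    using sub2 sub21 unfolding subalgebra_def by auto
  show "prob_space M" "X \<in> borel_measurable F1"
    using assms unfolding one_step_process_def by auto
  show "X \<in> borel_measurable M" "Y \<in> borel_measurable M"
    using measurable_from_subalg[OF sub X] measurable_from_subalg[OF sub2 Y] .
qed

lemma cond_law_measurable_PY:
  fixes \<kappa> :: "'c \<Rightarrow> 'b::second_countable_topology measure"
  assumes "subalgebra M F1" "is_cond_law M F1 Y \<kappa>"
  shows "\<kappa> \<in> measurable F1 PY"
  using assms by (intro measurable_PY) (auto simp: is_cond_law_def subalgebra_def)

lemma distr_Pair_cond_law:
  fixes X :: "'c \<Rightarrow> 'a::topological_space" and Y :: "'c \<Rightarrow> 'b::topological_space"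
  assumes M: "prob_space M" and sub: "subalgebra M F1" and X: "X \<in> borel_measurable F1"
    and Y: "Y \<in> borel_measurable M" and \<kappa>: "is_cond_law M F1 Y \<kappa>"
    and \<kappa>_meas: "\<kappa> \<in> measurable M (subprob_algebra borel)"
  shows "M \<bind> (\<lambda>\<omega>. distr (\<kappa> \<omega>) (borel \<Otimes>\<^sub>M borel) (Pair (X \<omega>)))
    = distr M (borel \<Otimes>\<^sub>M borel) (\<lambda>\<omega>. (X \<omega>, Y \<omega>))"
    (is "M \<bind> ?K = ?D")
proof -
  interpret prob_space M by fact
  have space_F1: "space F1 = space M" using sub by (simp add: subalgebra_def)
  have X_M[measurable]: "X \<in> borel_measurable M" by (rule measurable_from_subalg[OF sub X])
  note Y[measurable] \<kappa>_meas[measurable]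
  have K[measurable]: "?K \<in> measurable M (subprob_algebra (borel \<Otimes>\<^sub>M borel))"
    by (rule measurable_distr2[where f="\<lambda>\<omega>. Pair (X \<omega>)"]) measurable
  define E where "E = {a \<times> b | a b. a \<in> sets (borel :: 'a measure) \<and> b \<in> sets (borel :: 'b measure)}"
  show ?thesis
  proof (rule measure_eqI_generator_eq[where E=E and \<Omega>=UNIV and A="\<lambda>_. UNIV"])
    show "Int_stable E" unfolding E_def by (rule Int_stable_pair_measure_generator)
    show "sets (M \<bind> ?K) = sigma_sets UNIV E" "sets ?D = sigma_sets UNIV E"
      unfolding sets_bind_measurable[OF K not_empty] E_def by (simp_all add: sets_pair_measure)
    show "range (\<lambda>_. UNIV) \<subseteq> E" unfolding E_def by (auto intro!: exI[of _ UNIV])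
    have "subprob_space (M \<bind> ?K)"
      by (rule subprob_space_bind[OF prob_space_imp_subprob_space[OF M] K])
    then show "emeasure (M \<bind> ?K) UNIV \<noteq> \<infinity>"
      by (simp add: subprob_space_def finite_measure.emeasure_finite)
  next
    fix Z
    assume "Z \<in> E"
    then obtain a b where Z: "Z = a \<times> b" "a \<in> sets borel" "b \<in> sets borel"
      unfolding E_def by blast
    have "X -` a \<inter> space M \<in> sets F1"
      using measurable_sets[OF X Z(2)] space_F1 by simp
    have "emeasure ?D Z = emeasure M ((\<lambda>\<omega>. (X \<omega>, Y \<omega>)) -` (a \<times> b) \<inter> space M)"
      unfolding Z(1) using Z(2,3) by (intro emeasure_distr) auto
    also have "(\<lambda>\<omega>. (X \<omega>, Y \<omega>)) -` (a \<times> b) \<inter> space M = (X -` a \<inter> space M) \<inter> Y -` b \<inter> space M"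
      by auto
    also have "emeasure M \<dots> = (\<integral>\<^sup>+\<omega>. emeasure (\<kappa> \<omega>) b * indicator (X -` a \<inter> space M) \<omega> \<partial>M)"
      using \<kappa> Z(3) \<open>X -` a \<inter> space M \<in> sets F1\<close> unfolding is_cond_law_def by blast
    also have "\<dots> = (\<integral>\<^sup>+\<omega>. emeasure (?K \<omega>) Z \<partial>M)"
    proof (intro nn_integral_cong)
      fix \<omega>
      assume "\<omega> \<in> space M"
      then have "sets (\<kappa> \<omega>) = sets borel" "space (\<kappa> \<omega>) = UNIV"
        using \<kappa> probsD(2,3) unfolding is_cond_law_def by auto
      then show "emeasure (\<kappa> \<omega>) b * indicator (X -` a \<inter> space M) \<omega> = emeasure (?K \<omega>) Z"
        using Z \<open>\<omega> \<in> space M\<close> measurable_Pair1'[of "X \<omega>" borel borel]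
        by (subst emeasure_distr) (auto simp: indicator_def cong: measurable_cong_sets)
    qed
    also have "\<dots> = emeasure (M \<bind> ?K) Z"
      using Z by (intro emeasure_bind[symmetric, OF not_empty K]) auto
    finally show "emeasure (M \<bind> ?K) Z = emeasure ?D Z" by simp
  qed auto
qed

lemma law_in_Lambda:
  fixes X :: "'c \<Rightarrow> 'a::{metric_space, second_countable_topology}"
    and Y :: "'c \<Rightarrow> 'b::{metric_space, second_countable_topology}"
  assumes proc: "one_step_process M F1 F2 X Y" and \<kappa>: "is_cond_law M F1 Y \<kappa>"
  shows "distr M XPY (\<lambda>\<omega>. (X \<omega>, \<kappa> \<omega>)) \<in> Lambda (distr M borel X) (distr M borel Y)"
proof -
  note M = one_step_processD(1)[OF proc] and sub = one_step_processD(2)[OF proc]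
    and X = one_step_processD(3)[OF proc]
    and [measurable] = one_step_processD(4)[OF proc] and Y[measurable] = one_step_processD(5)[OF proc]
  interpret prob_space M by (fact M)
  have [measurable]: "\<kappa> \<in> measurable M PY"
    using measurable_from_subalg[OF sub cond_law_measurable_PY[OF sub \<kappa>]] .
  then have T[measurable]: "(\<lambda>\<omega>. (X \<omega>, \<kappa> \<omega>)) \<in> measurable M XPY"
    unfolding XPY_def by measurable
  define P where "P = distr M XPY (\<lambda>\<omega>. (X \<omega>, \<kappa> \<omega>))"
  have P: "prob_space P" "sets P = sets XPY"
    unfolding P_def by (auto intro: prob_space_distr)
  have "intensity P = M \<bind> (\<lambda>\<omega>. distr (\<kappa> \<omega>) (borel \<Otimes>\<^sub>M borel) (Pair (X \<omega>)))"
    unfolding intensity_def P_def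
    by (simp add: bind_distr[OF T measurable_intensity_kernel not_empty])
  also have "\<dots> = distr M (borel \<Otimes>\<^sub>M borel) (\<lambda>\<omega>. (X \<omega>, Y \<omega>))"
    using \<open>\<kappa> \<in> measurable M PY\<close>
    by (intro distr_Pair_cond_law[OF M sub X Y \<kappa>] measurable_compose[OF _ measurable_PY_subprob_algebra])
  finally show ?thesis
    unfolding Lambda_iff_intensity P_def[symmetric] using P
    by (simp add: distr_distr comp_def)
qed

lemma const_kernel_in_Lambda:
  fixes \<mu> :: "'a::{metric_space, second_countable_topology} measure"
    and \<nu> :: "'b::{metric_space, second_countable_topology} measure"
  assumes \<mu>: "prob_space \<mu>" "sets \<mu> = sets borel" and \<nu>: "prob_space \<nu>" "sets \<nu> = sets borel"
  shows "distr \<mu> XPY (\<lambda>x. (x, \<nu>)) \<in> Lambda \<mu> \<nu>"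
proof -
  interpret \<mu>: prob_space \<mu> by (fact \<mu>(1))
  have T: "(\<lambda>x. (x, \<nu>)) \<in> measurable \<mu> XPY"
    unfolding XPY_def using \<mu>(2) \<nu> by (auto simp: probs_def cong: measurable_cong_sets)
  define K where "K = (\<lambda>x :: 'a. distr \<nu> (borel \<Otimes>\<^sub>M borel) (Pair x))"
  have K: "K \<in> measurable \<mu> (subprob_algebra (borel \<Otimes>\<^sub>M borel))"
    using measurable_compose[OF T measurable_intensity_kernel] by (simp add: K_def)
  have "intensity (distr \<mu> XPY (\<lambda>x. (x, \<nu>))) = \<mu> \<bind> K"
    unfolding intensity_def K_def
    by (simp add: bind_distr[OF T measurable_intensity_kernel \<mu>.not_empty])
  moreover have "distr (\<mu> \<bind> K) borel fst = \<mu>"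
  proof -
    have "distr (K x) borel fst = return borel x" for x
      unfolding K_def using \<nu> measurable_Pair1'[of x borel borel]
      by (subst distr_distr) (auto simp: comp_def prob_space.distr_const cong: measurable_cong_sets)
    then show ?thesis
      using \<mu>(2) by (simp add: distr_bind[OF K \<mu>.not_empty] bind_return'')
  qed
  moreover have "distr (\<mu> \<bind> K) borel snd = \<nu>"
  proof -
    have "distr (K x) borel snd = \<nu>" for x
      unfolding K_def using \<nu>(2) measurable_Pair1'[of x borel borel]
      by (subst distr_distr) (auto simp: comp_def distr_id2 cong: measurable_cong_sets)
    then show ?thesis
      by (simp add: distr_bind[OF K \<mu>.not_empty] bind_const'[OF \<mu>(1) prob_space_imp_subprob_space[OF \<nu>(1)]])
  qed
  ultimately show ?thesis
    using T by (simp add: Lambda_iff_intensity \<mu>.prob_space_distr)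
qed

section \<open>The canonical process of an element of \<open>\<Lambda>(\<mu>, \<nu>)\<close>\<close>

definition canonical_law ::
  "('a::topological_space \<times> 'b::topological_space measure) measure \<Rightarrow> (('a \<times> 'b measure) \<times> 'b) measure" where
  "canonical_law P = P \<bind> (\<lambda>xp. distr (snd xp) (XPY \<Otimes>\<^sub>M borel) (Pair xp))"

definition canonical_F1 ::
  "('a::topological_space \<times> 'b::topological_space measure) measure \<Rightarrow> (('a \<times> 'b measure) \<times> 'b) measure" where
  "canonical_F1 P = vimage_algebra (space (canonical_law P)) fst XPY"

lemma measurable_canonical_kernel:
  "(\<lambda>xp. distr (snd xp) (XPY \<Otimes>\<^sub>M borel) (Pair xp))
    \<in> measurable (XPY :: ('a::topological_space \<times> 'b::metric_space measure) measure)
        (subprob_algebra (XPY \<Otimes>\<^sub>M borel))"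
  by (rule measurable_distr2[OF _ measurable_snd_XPY]) simp

lemma prob_space_canonical_kernel:
  assumes "xp \<in> space XPY"
  shows "prob_space (distr (snd xp) (XPY \<Otimes>\<^sub>M borel) (Pair xp))"
proof -
  have "snd xp \<in> probs" using assms by (auto simp: space_XPY)
  then show ?thesis
    using measurable_Pair1'[OF assms, of borel] probsD(1,2)[of "snd xp"]
    by (intro prob_space.prob_space_distr) (auto cong: measurable_cong_sets)
qed

context
  fixes P :: "('a::{metric_space, second_countable_topology} \<times>
      'b::{metric_space, second_countable_topology} measure) measure"
  assumes P: "prob_space P" "sets P = sets XPY"
begin

lemma space_P: "space P = UNIV \<times> probs"
  using sets_eq_imp_space_eq[OF P(2)] by (simp add: space_XPY)

lemma measurable_canonical_kernel':
  "(\<lambda>xp. distr (snd xp) (XPY \<Otimes>\<^sub>M borel) (Pair xp)) \<in> measurable P (subprob_algebra (XPY \<Otimes>\<^sub>M borel))"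
  using measurable_canonical_kernel by (simp cong: measurable_cong_sets add: P(2))

lemma sets_canonical_law: "sets (canonical_law P) = sets (XPY \<Otimes>\<^sub>M borel)"
  unfolding canonical_law_def
  by (rule sets_bind_measurable[OF measurable_canonical_kernel' prob_space.not_empty[OF P(1)]])

lemma space_canonical_law: "space (canonical_law P) = (UNIV \<times> probs) \<times> UNIV"
  using sets_eq_imp_space_eq[OF sets_canonical_law] by (simp add: space_pair_measure space_XPY)

lemma prob_space_canonical_law: "prob_space (canonical_law P)"
  unfolding canonical_law_def using prob_space_canonical_kernel sets_eq_imp_space_eq[OF P(2)]
  by (intro prob_space.prob_space_bind[OF P(1) _ measurable_canonical_kernel'] AE_I2) simp

lemma measurable_fst_canonical_law: "fst \<in> measurable (canonical_law P) XPY"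
  using sets_canonical_law by (simp cong: measurable_cong_sets)

lemma emeasure_canonical_law:
  assumes "C \<in> sets (XPY \<Otimes>\<^sub>M borel)"
  shows "emeasure (canonical_law P) C = (\<integral>\<^sup>+xp. emeasure (snd xp) (Pair xp -` C) \<partial>P)"
  unfolding canonical_law_def
proof (subst emeasure_bind[OF prob_space.not_empty[OF P(1)] measurable_canonical_kernel' assms],
    intro nn_integral_cong)
  fix xp
  assume "xp \<in> space P"
  then have "xp \<in> space XPY" "snd xp \<in> probs"
    using space_P sets_eq_imp_space_eq[OF P(2)] by auto
  then show "emeasure (distr (snd xp) (XPY \<Otimes>\<^sub>M borel) (Pair xp)) C = emeasure (snd xp) (Pair xp -` C)"
    using measurable_Pair1'[of xp XPY borel] assms probsD(2,3)[of "snd xp"]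
    by (subst emeasure_distr) (auto cong: measurable_cong_sets)
qed

lemma distr_fst_canonical_law: "distr (canonical_law P) XPY fst = P"
proof (rule measure_eqI)
  fix A
  assume "A \<in> sets (distr (canonical_law P) XPY fst)"
  then have A: "A \<in> sets XPY" by simp
  have "fst -` A \<inter> space (canonical_law P) = A \<times> UNIV"
    using sets.sets_into_space[OF A] by (auto simp: space_canonical_law space_XPY)
  then have "emeasure (distr (canonical_law P) XPY fst) A = emeasure (canonical_law P) (A \<times> UNIV)"
    by (simp add: emeasure_distr[OF measurable_fst_canonical_law A])
  also have "\<dots> = (\<integral>\<^sup>+xp. indicator A xp \<partial>P)"
    using A space_P emeasure_UNIV_probs
    by (subst emeasure_canonical_law) (auto intro!: nn_integral_cong simp: indicator_def)
  also have "\<dots> = emeasure P A"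
    using A P(2) by simp
  finally show "emeasure (distr (canonical_law P) XPY fst) A = emeasure P A" .
qed (simp add: P(2))

lemma intensity_eq_distr_canonical_law:
  "intensity P = distr (canonical_law P) (borel \<Otimes>\<^sub>M borel) (\<lambda>\<omega>. (fst (fst \<omega>), snd \<omega>))"
proof -
  have [measurable]: "(\<lambda>\<omega>. (fst (fst \<omega>), snd \<omega>)) \<in> measurable (XPY \<Otimes>\<^sub>M borel) (borel \<Otimes>\<^sub>M borel)"
    unfolding XPY_def by measurable
  have "distr (distr (snd xp) (XPY \<Otimes>\<^sub>M borel) (Pair xp)) (borel \<Otimes>\<^sub>M borel) (\<lambda>\<omega>. (fst (fst \<omega>), snd \<omega>))
      = distr (snd xp) (borel \<Otimes>\<^sub>M borel) (Pair (fst xp))" if "xp \<in> space P" for xp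
    using that measurable_Pair1'[of xp XPY borel] probsD(2)[of "snd xp"] space_P
      sets_eq_imp_space_eq[OF P(2)]
    by (subst distr_distr) (auto simp: comp_def cong: measurable_cong_sets)
  then show ?thesis
    unfolding canonical_law_def intensity_def
    by (simp add: distr_bind[OF measurable_canonical_kernel' prob_space.not_empty[OF P(1)]] cong: bind_cong)
qed

lemma subalgebra_canonical_F1: "subalgebra (canonical_law P) (canonical_F1 P)"
  unfolding subalgebra_def canonical_F1_def
  using measurable_sets[OF measurable_fst_canonical_law]
  by (auto simp: sets_vimage_algebra2 measurable_space[OF measurable_fst_canonical_law])

lemma measurable_fst_canonical_F1: "fst \<in> measurable (canonical_F1 P) XPY"
  unfolding canonical_F1_def
  by (rule measurable_vimage_algebra1) (use measurable_space[OF measurable_fst_canonical_law] in blast)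

lemma one_step_canonical_process:
  "one_step_process (canonical_law P) (canonical_F1 P) (canonical_law P) (\<lambda>\<omega>. fst (fst \<omega>)) snd"
proof -
  have "(\<lambda>\<omega>. fst (fst \<omega>)) \<in> borel_measurable (canonical_F1 P)"
    by (rule measurable_compose[OF measurable_fst_canonical_F1]) (simp add: XPY_def)
  moreover have "snd \<in> borel_measurable (canonical_law P)"
    using sets_canonical_law by (simp cong: measurable_cong_sets)
  ultimately show ?thesis
    unfolding one_step_process_def
    using prob_space_canonical_law subalgebra_canonical_F1 by (auto simp: subalgebra_def)
qed

lemma cond_law_canonical_process:
  "is_cond_law (canonical_law P) (canonical_F1 P) snd (\<lambda>\<omega>. snd (fst \<omega>))"
  unfolding is_cond_law_def
proof (intro conjI ballI)
  show "snd (fst \<omega>) \<in> probs" if "\<omega> \<in> space (canonical_law P)" for \<omega>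
    using that by (auto simp: space_canonical_law)
  fix B :: "'b set"
  assume B: "B \<in> sets borel"
  have emeasure_B[measurable]: "(\<lambda>xp. emeasure (snd xp) B) \<in> borel_measurable XPY"
    by (rule measurable_compose[OF measurable_snd_XPY measurable_emeasure_subprob_algebra[OF B]])
  show "(\<lambda>\<omega>. emeasure (snd (fst \<omega>)) B) \<in> borel_measurable (canonical_F1 P)"
    using measurable_compose[OF measurable_fst_canonical_F1 emeasure_B] by simp
  fix A
  assume "A \<in> sets (canonical_F1 P)"
  then obtain A' where A: "A = fst -` A' \<inter> space (canonical_law P)" and A'[measurable]: "A' \<in> sets XPY"
    unfolding canonical_F1_def
    by (auto simp: sets_vimage_algebra2 measurable_space[OF measurable_fst_canonical_law])
  have "A \<inter> snd -` B \<inter> space (canonical_law P) = A' \<times> B"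
    using A A' B sets.sets_into_space[OF A'] by (auto simp: space_canonical_law space_XPY)
  then have "emeasure (canonical_law P) (A \<inter> snd -` B \<inter> space (canonical_law P))
      = (\<integral>\<^sup>+xp. emeasure (snd xp) B * indicator A' xp \<partial>P)"
    using A' B by (subst emeasure_canonical_law) (auto intro!: nn_integral_cong simp: indicator_def)
  also have "\<dots> = (\<integral>\<^sup>+xp. emeasure (snd xp) B * indicator A' xp \<partial>distr (canonical_law P) XPY fst)"
    by (simp add: distr_fst_canonical_law)
  also have "\<dots> = (\<integral>\<^sup>+\<omega>\<in>A. emeasure (snd (fst \<omega>)) B \<partial>canonical_law P)"
    unfolding A using measurable_fst_canonical_law
    by (subst nn_integral_distr) (auto intro!: nn_integral_cong simp: indicator_def)
  finally show "emeasure (canonical_law P) (A \<inter> snd -` B \<inter> space (canonical_law P))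
      = (\<integral>\<^sup>+\<omega>\<in>A. emeasure (snd (fst \<omega>)) B \<partial>canonical_law P)" .
qed

end

lemma ext_integral_distr_AE:
  assumes F: "F \<in> borel_measurable N" and T: "T \<in> measurable M N"
    and AE: "AE \<omega> in M. G \<omega> = F (T \<omega>)"
  shows "ext_integrable M G \<longleftrightarrow> ext_integrable (distr M N T) F"
    and "ext_integral M G = ext_integral (distr M N T) F"
proof -
  have "(\<integral>\<^sup>+\<omega>. e2ennreal (G \<omega>) \<partial>M) = (\<integral>\<^sup>+z. e2ennreal (F z) \<partial>distr M N T)"
    "(\<integral>\<^sup>+\<omega>. e2ennreal (- G \<omega>) \<partial>M) = (\<integral>\<^sup>+z. e2ennreal (- F z) \<partial>distr M N T)"
    using F AE by (auto simp: nn_integral_distr[OF T] intro!: nn_integral_cong_AE)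
  then show "ext_integrable M G \<longleftrightarrow> ext_integrable (distr M N T) F"
    and "ext_integral M G = ext_integral (distr M N T) F"
    unfolding ext_integrable_def ext_integral_def by simp_all
qed

lemma process_imp_Lambda:
  fixes X :: "'c \<Rightarrow> 'a::{metric_space, second_countable_topology}"
    and Y :: "'c \<Rightarrow> 'b::{metric_space, second_countable_topology}"
  assumes \<mu>: "prob_space \<mu>" "sets \<mu> = sets borel" and \<nu>: "prob_space \<nu>" "sets \<nu> = sets borel"
    and proc: "one_step_process M F1 F2 X Y" and X: "distr M borel X = \<mu>" and Y: "distr M borel Y = \<nu>"
  shows "\<exists>P \<in> Lambda \<mu> \<nu>. \<forall>\<kappa>. is_cond_law M F1 Y \<kappa> \<longrightarrow>
    (\<forall>F \<in> borel_measurable XPY. ext_integrable M (\<lambda>\<omega>. F (X \<omega>, \<kappa> \<omega>)) \<longrightarrow>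
      ext_integrable P F \<and> ext_integral M (\<lambda>\<omega>. F (X \<omega>, \<kappa> \<omega>)) = ext_integral P F)"
proof (cases "\<exists>\<kappa>. is_cond_law M F1 Y \<kappa>")
  case False
  \<comment> \<open>Without a conditional law the claim about \<open>P\<close> is vacuous; any element of \<open>\<Lambda>(\<mu>, \<nu>)\<close> will do.\<close>
  then show ?thesis
    using const_kernel_in_Lambda[OF \<mu> \<nu>] by blast
next
  case True
  then obtain \<kappa>\<^sub>0 where \<kappa>\<^sub>0: "is_cond_law M F1 Y \<kappa>\<^sub>0" ..
  note M = one_step_processD(1)[OF proc] and sub = one_step_processD(2)[OF proc]
  have "X \<in> borel_measurable M" by (rule one_step_processD(4)[OF proc])
  then have T: "(\<lambda>\<omega>. (X \<omega>, \<kappa>\<^sub>0 \<omega>)) \<in> measurable M XPY"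
    using measurable_from_subalg[OF sub cond_law_measurable_PY[OF sub \<kappa>\<^sub>0]]
    unfolding XPY_def by measurable
  have "ext_integrable (distr M XPY (\<lambda>\<omega>. (X \<omega>, \<kappa>\<^sub>0 \<omega>))) F \<and>
      ext_integral M (\<lambda>\<omega>. F (X \<omega>, \<kappa> \<omega>)) = ext_integral (distr M XPY (\<lambda>\<omega>. (X \<omega>, \<kappa>\<^sub>0 \<omega>))) F"
    if "is_cond_law M F1 Y \<kappa>" "F \<in> borel_measurable XPY" "ext_integrable M (\<lambda>\<omega>. F (X \<omega>, \<kappa> \<omega>))"
    for \<kappa> F
  proof -
    have "AE \<omega> in M. F (X \<omega>, \<kappa> \<omega>) = F (X \<omega>, \<kappa>\<^sub>0 \<omega>)"
      using cond_law_AE_eq[OF M sub that(1) \<kappa>\<^sub>0] by eventually_elim simp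
    then show ?thesis
      using ext_integral_distr_AE[OF that(2) T] that(3) by simp
  qed
  moreover have "distr M XPY (\<lambda>\<omega>. (X \<omega>, \<kappa>\<^sub>0 \<omega>)) \<in> Lambda \<mu> \<nu>"
    using law_in_Lambda[OF proc \<kappa>\<^sub>0] X Y by simp
  ultimately show ?thesis by blast
qed

lemma Lambda_imp_process:
  fixes P :: "('a::{metric_space, second_countable_topology} \<times>
      'b::{metric_space, second_countable_topology} measure) measure"
  assumes "P \<in> Lambda \<mu> \<nu>"
  shows "\<exists>(M :: (('a \<times> 'b measure) \<times> 'b) measure) F1 F2 X Y.
    one_step_process M F1 F2 X Y \<and> distr M borel X = \<mu> \<and> distr M borel Y = \<nu> \<and>
    (\<exists>\<kappa>. is_cond_law M F1 Y \<kappa>) \<and>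
    (\<forall>\<kappa>. is_cond_law M F1 Y \<kappa> \<longrightarrow> (\<forall>F \<in> borel_measurable XPY. ext_integrable P F \<longrightarrow>
      ext_integrable M (\<lambda>\<omega>. F (X \<omega>, \<kappa> \<omega>)) \<and> ext_integral M (\<lambda>\<omega>. F (X \<omega>, \<kappa> \<omega>)) = ext_integral P F))"
proof -
  have P: "prob_space P" "sets P = sets XPY"
    and \<mu>\<nu>: "distr (intensity P) borel fst = \<mu>" "distr (intensity P) borel snd = \<nu>"
    using assms by (auto simp: Lambda_iff_intensity)
  let ?M = "canonical_law P" and ?F1 = "canonical_F1 P"
  have fst_meas: "fst \<in> measurable ?M XPY"
    and fst_snd_meas: "(\<lambda>\<omega>. (fst (fst \<omega>), snd \<omega>)) \<in> measurable ?M (borel \<Otimes>\<^sub>M borel)"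
    using sets_canonical_law[OF P] unfolding XPY_def by (simp_all cong: measurable_cong_sets)
  have "distr ?M borel (\<lambda>\<omega>. fst (fst \<omega>)) = \<mu>" "distr ?M borel snd = \<nu>"
    using \<mu>\<nu> fst_snd_meas
    by (simp_all add: intensity_eq_distr_canonical_law[OF P] distr_distr comp_def)
  moreover have "ext_integrable ?M (\<lambda>\<omega>. F (fst (fst \<omega>), \<kappa> \<omega>)) \<and>
      ext_integral ?M (\<lambda>\<omega>. F (fst (fst \<omega>), \<kappa> \<omega>)) = ext_integral P F"
    if "is_cond_law ?M ?F1 snd \<kappa>" "F \<in> borel_measurable XPY" "ext_integrable P F" for \<kappa> F
  proof -
    have "AE \<omega> in ?M. F (fst (fst \<omega>), \<kappa> \<omega>) = F (fst \<omega>)"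
      using cond_law_AE_eq[OF prob_space_canonical_law[OF P] subalgebra_canonical_F1[OF P]
          that(1) cond_law_canonical_process[OF P]]
      by eventually_elim simp
    then show ?thesis
      using ext_integral_distr_AE[OF that(2) fst_meas] that(3) distr_fst_canonical_law[OF P] by simp
  qed
  ultimately show ?thesis
    using one_step_canonical_process[OF P] cond_law_canonical_process[OF P] by blast
qed

theorem lemma3p2:
  fixes \<mu> :: "'a::polish_space measure" and \<nu> :: "'b::polish_space measure"
  assumes "prob_space \<mu>" "sets \<mu> = sets borel"
      and "prob_space \<nu>" "sets \<nu> = sets borel"
  shows
    "(\<forall>(M :: 'c measure) F1 F2 (X :: 'c \<Rightarrow> 'a) (Y :: 'c \<Rightarrow> 'b).
        one_step_process M F1 F2 X Y \<and> distr M borel X = \<mu> \<and> distr M borel Y = \<nu> \<longrightarrow>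
        (\<exists>P \<in> Lambda \<mu> \<nu>. \<forall>\<kappa>. is_cond_law M F1 Y \<kappa> \<longrightarrow>
           (\<forall>F \<in> borel_measurable XPY.
              ext_integrable M (\<lambda>\<omega>. F (X \<omega>, \<kappa> \<omega>)) \<longrightarrow>
                ext_integrable P F \<and>
                ext_integral M (\<lambda>\<omega>. F (X \<omega>, \<kappa> \<omega>)) = ext_integral P F)))
     \<and>
     (\<forall>P \<in> Lambda \<mu> \<nu>.
        \<exists>(M :: (('a \<times> 'b measure) \<times> 'b) measure) F1 F2 X Y.
          one_step_process M F1 F2 X Y \<and> distr M borel X = \<mu> \<and> distr M borel Y = \<nu> \<and>
          (\<exists>\<kappa>. is_cond_law M F1 Y \<kappa>) \<and>
          (\<forall>\<kappa>. is_cond_law M F1 Y \<kappa> \<longrightarrow>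
             (\<forall>F \<in> borel_measurable XPY.
                ext_integrable P F \<longrightarrow>
                  ext_integrable M (\<lambda>\<omega>. F (X \<omega>, \<kappa> \<omega>)) \<and>
                  ext_integral M (\<lambda>\<omega>. F (X \<omega>, \<kappa> \<omega>)) = ext_integral P F)))"
  using process_imp_Lambda[OF assms] Lambda_imp_process by blast

end
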